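(* Let $\Omega\subset\mathbb{R}^n$ be a bounded domain for which the Poincaré inequality $\|v-v^\Omega\|\le C_P\|\nabla v\|$ holds for all $v\in H^1(\Omega)$, where $v^\Omega=|\Omega|^{-1}\int_\Omega v$. Let $D>0$, $L\in\mathbb{R}$, $\beta\ge0$, $T>0$, $K\in\mathbb N$, $\tau=T/K$. Let $u^0,\dots,u^K\in L^2(\Omega)$, $\theta^0\in L^2(\Omega)$, and let $\theta^1,\dots,\theta^K\in H^1(\Omega)$ satisfy $$(\theta^k-\theta^{k-1},\phi)+D\tau(\nabla\theta^k,\nabla\phi)-L(u^k-u^{k-1},\phi)=0\quad\forall\phi\in H^1(\Omega),\ k=1,\dots,K.$$ Then $$\tau\sum_{k=1}^K\|\nabla\theta^k\|^2\le D^{-1}\|\theta^0\|^2+D^{-2}L^2(\beta+C_P^2)\,\frac1\tau\sum_{k=1}^K\|u^k-u^{k-1}\|_{V_A'}^2.$$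
   Context: $(\cdot,\cdot)$ and $\|\cdot\|$ denote the $L^2(\Omega)$ inner product and norm. $V_A$ is $L^2(\Omega)$ if $\beta=0$ and $H^1(\Omega)$ if $\beta>0$, with norm $\|v\|_{V_A}^2=\beta\|\nabla v\|^2+\|v\|^2$; $\|\cdot\|_{V_A'}$ is the dual norm, $\|f\|_{V_A'}=\sup_{0\ne v\in V_A}(f,v)/\|v\|_{V_A}$ for $f\in L^2(\Omega)$. In terms of the interpolants of the paper, the left side is $\|\nabla\bar\theta_\tau\|_{L^2(Q)}^2$ and the last sum is $\|\partial_t\hat u_\tau\|^2_{L^2(0,T;V_A')}$. *)

theory Defs
  imports "HOL-Analysis.Analysis"
begin

coinductive smooth_fun :: "('a::euclidean_space \<Rightarrow> real) \<Rightarrow> bool" where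
  "\<lbrakk> \<forall>x. f differentiable (at x);
     \<forall>i\<in>Basis. smooth_fun (\<lambda>x. frechet_derivative f (at x) i) \<rbrakk> \<Longrightarrow> smooth_fun f"

definition test_fun :: "'a::euclidean_space set \<Rightarrow> ('a \<Rightarrow> real) \<Rightarrow> bool" where
  "test_fun \<Omega> \<phi> \<longleftrightarrow> smooth_fun \<phi> \<and> compact (closure {x. \<phi> x \<noteq> 0})
      \<and> closure {x. \<phi> x \<noteq> 0} \<subseteq> \<Omega>"

definition L2 :: "'a::euclidean_space set \<Rightarrow> ('a \<Rightarrow> real) \<Rightarrow> bool" where
  "L2 \<Omega> f \<longleftrightarrow> f \<in> borel_measurable (lebesgue_on \<Omega>)
      \<and> integrable (lebesgue_on \<Omega>) (\<lambda>x. (f x)\<^sup>2)"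

definition ip :: "'a::euclidean_space set \<Rightarrow> ('a \<Rightarrow> real) \<Rightarrow> ('a \<Rightarrow> real) \<Rightarrow> real" where
  "ip \<Omega> f g = (\<integral>x. f x * g x \<partial>lebesgue_on \<Omega>)"

definition nrm :: "'a::euclidean_space set \<Rightarrow> ('a \<Rightarrow> real) \<Rightarrow> real" where
  "nrm \<Omega> f = sqrt (\<integral>x. (f x)\<^sup>2 \<partial>lebesgue_on \<Omega>)"

definition ipv :: "'a::euclidean_space set \<Rightarrow> ('a \<Rightarrow> 'a) \<Rightarrow> ('a \<Rightarrow> 'a) \<Rightarrow> real" where
  "ipv \<Omega> f g = (\<integral>x. f x \<bullet> g x \<partial>lebesgue_on \<Omega>)"

definition nrmv :: "'a::euclidean_space set \<Rightarrow> ('a \<Rightarrow> 'a) \<Rightarrow> real" where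
  "nrmv \<Omega> g = sqrt (\<integral>x. (norm (g x))\<^sup>2 \<partial>lebesgue_on \<Omega>)"

definition weak_grad :: "'a::euclidean_space set \<Rightarrow> ('a \<Rightarrow> real) \<Rightarrow> ('a \<Rightarrow> 'a) \<Rightarrow> bool" where
  "weak_grad \<Omega> v g \<longleftrightarrow> (\<forall>\<phi>. test_fun \<Omega> \<phi> \<longrightarrow> (\<forall>i\<in>Basis.
      (\<integral>x. v x * frechet_derivative \<phi> (at x) i \<partial>lebesgue_on \<Omega>)
        = - (\<integral>x. (g x \<bullet> i) * \<phi> x \<partial>lebesgue_on \<Omega>)))"

definition H1 :: "'a::euclidean_space set \<Rightarrow> ('a \<Rightarrow> real) \<Rightarrow> ('a \<Rightarrow> 'a) \<Rightarrow> bool" where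
  "H1 \<Omega> v g \<longleftrightarrow> L2 \<Omega> v \<and> (\<forall>i\<in>Basis. L2 \<Omega> (\<lambda>x. g x \<bullet> i)) \<and> weak_grad \<Omega> v g"

definition mean :: "'a::euclidean_space set \<Rightarrow> ('a \<Rightarrow> real) \<Rightarrow> real" where
  "mean \<Omega> v = (\<integral>x. v x \<partial>lebesgue_on \<Omega>) / measure lebesgue \<Omega>"

(* dual norm on V_A' : V_A = L^2 if beta = 0, H^1 with norm beta|grad v|^2+|v|^2 if beta>0 *)
definition dual_norm :: "'a::euclidean_space set \<Rightarrow> real \<Rightarrow> ('a \<Rightarrow> real) \<Rightarrow> real" where
  "dual_norm \<Omega> \<beta> f =
     (if \<beta> = 0 then Sup {ip \<Omega> f v / nrm \<Omega> v | v. L2 \<Omega> v \<and> nrm \<Omega> v \<noteq> 0}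
      else Sup {ip \<Omega> f v / sqrt (\<beta> * (nrmv \<Omega> g)\<^sup>2 + (nrm \<Omega> v)\<^sup>2) | v g.
                  H1 \<Omega> v g \<and> sqrt (\<beta> * (nrmv \<Omega> g)\<^sup>2 + (nrm \<Omega> v)\<^sup>2) \<noteq> 0})"

end

theory Submission
  imports Defs
begin

text \<open>Test step \<open>k\<close> with the centred solution \<open>w_k = \<theta>_k - mean \<theta>_k\<close>. It lies in \<open>H\<^sup>1\<close> with
  the gradient of \<open>\<theta>_k\<close> because constants have weak gradient zero, and since it has mean zero
  the time difference gives \<open>(\<theta>_k - \<theta>_(k-1), w_k) = (w_k - w_(k-1), w_k) \<ge> (\<parallel>w_k\<parallel>\<^sup>2 - \<parallel>w_(k-1)\<parallel>\<^sup>2)/2\<close>.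
  The source term is at most \<open>\<bar>L\<bar> \<parallel>u_k - u_(k-1)\<parallel>_V_A' \<parallel>w_k\<parallel>_V_A\<close>, and the Poincar\'e inequality
  gives \<open>\<parallel>w_k\<parallel>_V_A\<^sup>2 \<le> (\<beta> + C_P\<^sup>2) \<parallel>\<nabla>\<theta>_k\<parallel>\<^sup>2\<close>, so Young's inequality absorbs half of
  \<open>D\<tau> \<parallel>\<nabla>\<theta>_k\<parallel>\<^sup>2\<close>. Summing over \<open>k\<close> telescopes the \<open>\<parallel>w_k\<parallel>\<^sup>2\<close>, and \<open>\<parallel>w_0\<parallel> \<le> \<parallel>\<theta>_0\<parallel>\<close>.\<close>

section \<open>Smooth functions with compact support\<close>

lemma smooth_fun_differentiable: "smooth_fun f \<Longrightarrow> f differentiable (at x)"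
  by (erule smooth_fun.cases) auto

lemma smooth_fun_partial:
  "smooth_fun f \<Longrightarrow> i \<in> Basis \<Longrightarrow> smooth_fun (\<lambda>x. frechet_derivative f (at x) i)"
  by (erule smooth_fun.cases) auto

lemma smooth_fun_continuous_on: "smooth_fun f \<Longrightarrow> continuous_on A f"
  by (meson continuous_at_imp_continuous_on differentiable_imp_continuous_within
      smooth_fun_differentiable)

lemma frechet_derivative_outside_support:
  fixes \<phi> :: "'a::real_normed_vector \<Rightarrow> real"
  assumes "x \<notin> closure {x. \<phi> x \<noteq> 0}"
  shows "frechet_derivative \<phi> (at x) = (\<lambda>h. 0)"
proof -
  have "(\<phi> has_derivative (\<lambda>h. 0)) (at x)"
  proof (rule has_derivative_transform_within_open[where s = "- closure {x. \<phi> x \<noteq> 0}"])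
    show "((\<lambda>_. 0) has_derivative (\<lambda>h. 0)) (at x)" by simp
    show "\<And>y. y \<in> - closure {x. \<phi> x \<noteq> 0} \<Longrightarrow> 0 = \<phi> y"
      by (metis (mono_tags) ComplD closure_subset mem_Collect_eq subsetD)
  qed (use assms in auto)
  then show ?thesis by (metis frechet_derivative_at)
qed

lemma has_real_derivative_along_line:
  fixes \<phi> :: "'a::real_normed_vector \<Rightarrow> real"
  assumes "\<phi> differentiable (at (x + s *\<^sub>R i))"
  shows "((\<lambda>s. \<phi> (x + s *\<^sub>R i)) has_real_derivative frechet_derivative \<phi> (at (x + s *\<^sub>R i)) i) (at s)"
proof -
  let ?D = "frechet_derivative \<phi> (at (x + s *\<^sub>R i))"
  have D: "(\<phi> has_derivative ?D) (at (x + s *\<^sub>R i))"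
    using assms frechet_derivative_works by blast
  have "((\<lambda>s. x + s *\<^sub>R i) has_derivative (\<lambda>h. h *\<^sub>R i)) (at s)"
    by (auto intro!: derivative_eq_intros)
  from diff_chain_at[OF this D]
  have "((\<lambda>s. \<phi> (x + s *\<^sub>R i)) has_derivative (\<lambda>h. ?D (h *\<^sub>R i))) (at s)"
    by (simp add: o_def)
  moreover have "(\<lambda>h. ?D (h *\<^sub>R i)) = (\<lambda>h. ?D i * h)"
    using linear_cmul[OF has_derivative_linear[OF D]] by (auto simp: mult.commute)
  ultimately show ?thesis by (simp add: has_field_derivative_def)
qed

lemma lborel_translate:
  fixes f :: "'a::euclidean_space \<Rightarrow> real"
  assumes "f \<in> borel_measurable borel"
  shows "integrable lborel (\<lambda>x. f (x + c)) \<longleftrightarrow> integrable lborel f"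
    and "(\<integral>x. f (x + c) \<partial>lborel) = (\<integral>x. f x \<partial>lborel)"
proof -
  have m: "(+) c \<in> measurable lborel borel" by simp
  show "integrable lborel (\<lambda>x. f (x + c)) \<longleftrightarrow> integrable lborel f"
    using integrable_distr_eq[OF m assms] lborel_distr_plus[of c] by (simp add: add.commute)
  show "(\<integral>x. f (x + c) \<partial>lborel) = (\<integral>x. f x \<partial>lborel)"
    using integral_distr[OF m assms] lborel_distr_plus[of c] by (simp add: add.commute)
qed

lemma difference_quotient_bounded:
  fixes \<phi> :: "'a::real_normed_vector \<Rightarrow> real"
  assumes "\<And>x. \<phi> differentiable (at x)"
    and "\<And>x. \<bar>frechet_derivative \<phi> (at x) i\<bar> \<le> B" and "t > 0"
  shows "\<bar>(\<phi> (x + t *\<^sub>R i) - \<phi> x) / t\<bar> \<le> B"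
proof -
  have "\<exists>z. 0 < z \<and> z < t \<and>
      \<phi> (x + t *\<^sub>R i) - \<phi> (x + 0 *\<^sub>R i) = (t - 0) * frechet_derivative \<phi> (at (x + z *\<^sub>R i)) i"
    by (rule MVT2[OF \<open>t > 0\<close>]) (use has_real_derivative_along_line[OF assms(1)] in auto)
  then obtain z where "\<phi> (x + t *\<^sub>R i) - \<phi> x = t * frechet_derivative \<phi> (at (x + z *\<^sub>R i)) i"
    by auto
  then show ?thesis using assms(2,3) by simp
qed

lemma bounded_partial_derivative:
  fixes \<phi> :: "'a::real_normed_vector \<Rightarrow> real"
  assumes cont: "continuous_on UNIV (\<lambda>x. frechet_derivative \<phi> (at x) i)"
    and supp: "compact (closure {x. \<phi> x \<noteq> 0})"
  obtains B where "\<And>x. \<bar>frechet_derivative \<phi> (at x) i\<bar> \<le> B"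
proof -
  let ?S = "closure {x. \<phi> x \<noteq> 0}"
  obtain B where B: "\<And>x. x \<in> ?S \<Longrightarrow> \<bar>frechet_derivative \<phi> (at x) i\<bar> \<le> B"
    using compact_imp_bounded[OF compact_continuous_image[OF continuous_on_subset[OF cont] supp]]
    by (auto simp: bounded_iff)
  show thesis
    using B frechet_derivative_outside_support[of _ \<phi>]
    by (intro that[of "max B 0"]) (metis abs_zero max.cobounded2 max.coboundedI1)
qed

lemma difference_quotient_le_indicator:
  fixes \<phi> :: "'a::real_normed_vector \<Rightarrow> real"
  assumes diff: "\<And>x. \<phi> differentiable (at x)"
    and B: "\<And>x. \<bar>frechet_derivative \<phi> (at x) i\<bar> \<le> B"
    and R: "\<And>x. \<phi> x \<noteq> 0 \<Longrightarrow> norm x \<le> R" and t: "0 < t" "t \<le> 1"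
  shows "\<bar>(\<phi> (x + t *\<^sub>R i) - \<phi> x) / t\<bar> \<le> B * indicator (cball 0 (R + norm i)) x"
proof (cases "norm x \<le> R + norm i")
  case True
  then show ?thesis
    using difference_quotient_bounded[OF diff B t(1)] by simp
next
  case False
  have "norm x - t * norm i \<le> norm (x + t *\<^sub>R i)"
    using norm_diff_ineq[of x "t *\<^sub>R i"] t(1) by simp
  moreover have "t * norm i \<le> norm i"
    using t by (simp add: mult_left_le_one_le)
  ultimately have "R < norm x" "R < norm (x + t *\<^sub>R i)"
    using False norm_ge_zero[of i] by linarith+
  then have "\<phi> x = 0" "\<phi> (x + t *\<^sub>R i) = 0"
    using R by (meson not_le)+
  then show ?thesis
    using False by simp
qed

lemma integrable_compact_support:
  fixes \<phi> :: "'a::euclidean_space \<Rightarrow> real"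
  assumes "continuous_on UNIV \<phi>" "compact (closure {x. \<phi> x \<noteq> 0})"
  shows "integrable lborel \<phi>"
proof -
  have "\<phi> x = indicator (closure {x. \<phi> x \<noteq> 0}) x *\<^sub>R \<phi> x" for x
    using closure_subset[of "{x. \<phi> x \<noteq> 0}"] by (cases "\<phi> x = 0") (auto simp: indicator_def)
  then have "\<phi> = (\<lambda>x. indicator (closure {x. \<phi> x \<noteq> 0}) x *\<^sub>R \<phi> x)" ..
  then show ?thesis
    using borel_integrable_compact[OF assms(2) continuous_on_subset[OF assms(1)]] by simp
qed

text \<open>The difference quotients in direction \<open>i\<close> have integral \<open>0\<close> by translation invariance
  of Lebesgue measure; they converge to the partial derivative and are dominated by a bounded
  function with compact support.\<close>
lemma integral_partial_derivative_eq_0: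
  fixes \<phi> :: "'a::euclidean_space \<Rightarrow> real"
  assumes diff: "\<And>x. \<phi> differentiable (at x)"
    and cont: "continuous_on UNIV (\<lambda>x. frechet_derivative \<phi> (at x) i)"
    and supp: "compact (closure {x. \<phi> x \<noteq> 0})"
  shows "(\<integral>x. frechet_derivative \<phi> (at x) i \<partial>lborel) = 0"
proof -
  define \<psi> where "\<psi> x = frechet_derivative \<phi> (at x) i" for x
  define t where "t n = inverse (real (Suc n))" for n
  define s where "s n x = (\<phi> (x + t n *\<^sub>R i) - \<phi> x) / t n" for n x
  have t: "0 < t n" "t n \<le> 1" for n
    unfolding t_def by (auto simp: field_simps)
  have \<phi>_cont: "continuous_on UNIV \<phi>"
    by (simp add: diff continuous_at_imp_continuous_on differentiable_imp_continuous_within)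
  obtain B where B: "\<And>x. \<bar>\<psi> x\<bar> \<le> B"
    using bounded_partial_derivative[OF cont supp] unfolding \<psi>_def by blast
  obtain R where "\<forall>x \<in> closure {x. \<phi> x \<noteq> 0}. norm x \<le> R"
    using compact_imp_bounded[OF supp] by (auto simp: bounded_iff)
  then have R: "\<And>x. \<phi> x \<noteq> 0 \<Longrightarrow> norm x \<le> R"
    using closure_subset[of "{x. \<phi> x \<noteq> 0}"] by auto
  have "(\<integral>x. s n x \<partial>lborel) = 0" for n
    using lborel_translate[of \<phi> "t n *\<^sub>R i"] borel_measurable_continuous_onI[OF \<phi>_cont]
      integrable_compact_support[OF \<phi>_cont supp] by (simp add: s_def)
  moreover have "(\<lambda>n. \<integral>x. s n x \<partial>lborel) \<longlonglongrightarrow> (\<integral>x. \<psi> x \<partial>lborel)"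
  proof (rule integral_dominated_convergence)
    show "integrable lborel (\<lambda>x::'a. B * indicator (cball 0 (R + norm i)) x)"
      by (intro integrable_mult_right integrable_real_indicator)
        (use emeasure_bounded_finite[of "cball (0::'a) (R + norm i)"] in auto)
    show "\<psi> \<in> borel_measurable lborel"
      using cont unfolding \<psi>_def by (simp add: borel_measurable_continuous_onI)
    show "s n \<in> borel_measurable lborel" for n
      using t(1)[of n] unfolding s_def
      by (auto intro!: borel_measurable_continuous_onI continuous_intros \<phi>_cont
          continuous_on_compose2[OF \<phi>_cont])
    show "AE x in lborel. norm (s n x) \<le> B * indicator (cball 0 (R + norm i)) x" for n
      using difference_quotient_le_indicator[OF diff B[unfolded \<psi>_def] R t] by (simp add: s_def)
    show "AE x in lborel. (\<lambda>n. s n x) \<longlonglongrightarrow> \<psi> x"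
    proof (rule always_eventually, rule allI)
      fix x
      have "((\<lambda>h. (\<phi> (x + h *\<^sub>R i) - \<phi> x) / h) \<longlongrightarrow> \<psi> x) (at 0)"
        using has_real_derivative_along_line[of \<phi> x 0 i] diff by (simp add: \<psi>_def DERIV_def)
      moreover have "filterlim t (at 0) sequentially"
        using t(1) LIMSEQ_inverse_real_of_nat unfolding t_def
        by (auto simp: filterlim_at intro!: always_eventually)
      ultimately show "(\<lambda>n. s n x) \<longlonglongrightarrow> \<psi> x"
        using filterlim_compose unfolding s_def by blast
    qed
  qed
  ultimately have "(\<lambda>n. 0) \<longlonglongrightarrow> (\<integral>x. \<psi> x \<partial>lborel)"
    by simp
  then show ?thesis
    unfolding \<psi>_def LIMSEQ_const_iff by simp
qed

section \<open>Square integrable functions\<close>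

lemma L2_square_integrable: "L2 \<Omega> f \<Longrightarrow> integrable (lebesgue_on \<Omega>) (\<lambda>x. (f x)\<^sup>2)"
  by (simp add: L2_def)

lemma L2_mult_integrable:
  assumes "L2 \<Omega> f" "L2 \<Omega> g"
  shows "integrable (lebesgue_on \<Omega>) (\<lambda>x. f x * g x)"
proof (rule Bochner_Integration.integrable_bound)
  show "integrable (lebesgue_on \<Omega>) (\<lambda>x. (f x)\<^sup>2 + (g x)\<^sup>2)"
    using assms by (auto intro: L2_square_integrable)
  show "(\<lambda>x. f x * g x) \<in> borel_measurable (lebesgue_on \<Omega>)"
    using assms by (auto simp: L2_def)
  have "\<bar>f x * g x\<bar> \<le> (f x)\<^sup>2 + (g x)\<^sup>2" for x
  proof -
    have "2 * \<bar>f x * g x\<bar> \<le> (f x)\<^sup>2 + (g x)\<^sup>2"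
      using sum_squares_bound[of "\<bar>f x\<bar>" "\<bar>g x\<bar>"] by (simp add: abs_mult mult.assoc)
    then show ?thesis by linarith
  qed
  then show "AE x in lebesgue_on \<Omega>. norm (f x * g x) \<le> norm ((f x)\<^sup>2 + (g x)\<^sup>2)"
    by simp
qed

lemma L2_const: "\<Omega> \<in> lmeasurable \<Longrightarrow> L2 \<Omega> (\<lambda>x. c)"
  unfolding L2_def using finite_measure.integrable_const[OF finite_measure_lebesgue_on] by simp

lemma L2_integrable: "\<Omega> \<in> lmeasurable \<Longrightarrow> L2 \<Omega> f \<Longrightarrow> integrable (lebesgue_on \<Omega>) f"
  using L2_mult_integrable[of \<Omega> f "\<lambda>x. 1"] L2_const[of \<Omega> 1] by simp

lemma L2_diff:
  assumes "L2 \<Omega> f" "L2 \<Omega> g"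
  shows "L2 \<Omega> (\<lambda>x. f x - g x)"
proof -
  have "(\<lambda>x. (f x - g x)\<^sup>2) = (\<lambda>x. (f x)\<^sup>2 - 2 * (f x * g x) + (g x)\<^sup>2)"
    by (simp add: power2_diff algebra_simps)
  then show ?thesis
    using assms L2_mult_integrable[OF assms] unfolding L2_def by auto
qed

lemma L2_minus: "L2 \<Omega> f \<Longrightarrow> L2 \<Omega> (\<lambda>x. - f x)"
  by (simp add: L2_def)

lemma nrm_nonneg: "0 \<le> nrm \<Omega> v"
  by (simp add: nrm_def integral_nonneg_AE)

lemma nrmv_nonneg: "0 \<le> nrmv \<Omega> g"
  by (simp add: nrmv_def integral_nonneg_AE)

lemma nrm_power2: "(nrm \<Omega> v)\<^sup>2 = (\<integral>x. (v x)\<^sup>2 \<partial>lebesgue_on \<Omega>)"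
  by (simp add: nrm_def integral_nonneg_AE)

lemma nrmv_power2: "(nrmv \<Omega> g)\<^sup>2 = (\<integral>x. (norm (g x))\<^sup>2 \<partial>lebesgue_on \<Omega>)"
  by (simp add: nrmv_def integral_nonneg_AE)

lemma ipv_self: "ipv \<Omega> g g = (nrmv \<Omega> g)\<^sup>2"
  by (simp add: ipv_def nrmv_power2 power2_norm_eq_inner)

lemma ip_eq_0_if_nrm_eq_0:
  assumes "L2 \<Omega> f" "L2 \<Omega> v" "nrm \<Omega> v = 0"
  shows "ip \<Omega> f v = 0"
proof -
  have "AE x in lebesgue_on \<Omega>. (v x)\<^sup>2 = 0"
    using assms(3) integral_nonneg_eq_0_iff_AE[OF L2_square_integrable[OF assms(2)]]
    by (simp add: nrm_def integral_nonneg_AE)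
  then have "AE x in lebesgue_on \<Omega>. f x * v x = 0"
    by eventually_elim simp
  then show ?thesis
    unfolding ip_def by (simp add: integral_eq_zero_AE)
qed

text \<open>Integrating \<open>2 \<bar>f v\<bar> \<le> (b/a) f\<^sup>2 + (a/b) v\<^sup>2\<close> with \<open>a = nrm f\<close>, \<open>b = nrm v\<close>.\<close>
lemma ip_Cauchy_Schwarz:
  assumes f: "L2 \<Omega> f" and v: "L2 \<Omega> v"
  shows "\<bar>ip \<Omega> f v\<bar> \<le> nrm \<Omega> f * nrm \<Omega> v"
proof (cases "nrm \<Omega> f = 0 \<or> nrm \<Omega> v = 0")
  case True
  then show ?thesis
    using ip_eq_0_if_nrm_eq_0[OF f v] ip_eq_0_if_nrm_eq_0[OF v f]
    by (auto simp: ip_def mult.commute)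
next
  case False
  define a where "a = nrm \<Omega> f"
  define b where "b = nrm \<Omega> v"
  have ab: "0 < a" "0 < b" using False nrm_nonneg by (auto simp: a_def b_def less_le)
  have pointwise: "\<bar>f x * v x\<bar> \<le> (b / a * (f x)\<^sup>2 + a / b * (v x)\<^sup>2) / 2" for x
  proof -
    have "0 \<le> (b * \<bar>f x\<bar> - a * \<bar>v x\<bar>)\<^sup>2 / (2 * a * b)" using ab by simp
    then show ?thesis using ab by (simp add: field_simps power2_eq_square abs_mult)
  qed
  have "\<bar>ip \<Omega> f v\<bar> \<le> (\<integral>x. \<bar>f x * v x\<bar> \<partial>lebesgue_on \<Omega>)"
    unfolding ip_def by (rule integral_abs_bound)
  also have "\<dots> \<le> (\<integral>x. (b / a * (f x)\<^sup>2 + a / b * (v x)\<^sup>2) / 2 \<partial>lebesgue_on \<Omega>)"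
    using pointwise L2_mult_integrable[OF f v] L2_square_integrable[OF f] L2_square_integrable[OF v]
    by (intro integral_mono) auto
  also have "\<dots> = (b / a * a\<^sup>2 + a / b * b\<^sup>2) / 2"
    using L2_square_integrable[OF f] L2_square_integrable[OF v]
    by (simp add: a_def b_def nrm_power2)
  also have "\<dots> = a * b"
    using ab by (simp add: power2_eq_square)
  finally show ?thesis by (simp add: a_def b_def)
qed

lemma L2_bounded:
  assumes \<Omega>: "\<Omega> \<in> lmeasurable" and f: "f \<in> borel_measurable (lebesgue_on \<Omega>)"
    and B: "\<And>x. \<bar>f x\<bar> \<le> B"
  shows "L2 \<Omega> f"
proof -
  have "integrable (lebesgue_on \<Omega>) (\<lambda>x. (f x)\<^sup>2)"
  proof (rule Bochner_Integration.integrable_bound)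
    show "integrable (lebesgue_on \<Omega>) (\<lambda>x. B\<^sup>2)"
      using L2_square_integrable[OF L2_const[OF \<Omega>]] .
    have "(f x)\<^sup>2 \<le> B\<^sup>2" for x
      using power_mono[OF B abs_ge_zero, of x 2] by simp
    then show "AE x in lebesgue_on \<Omega>. norm ((f x)\<^sup>2) \<le> norm (B\<^sup>2)"
      by simp
  qed (use f in simp)
  then show ?thesis
    using f by (simp add: L2_def)
qed

lemma test_fun_partial:
  fixes \<phi> :: "'a::euclidean_space \<Rightarrow> real"
  assumes \<Omega>: "\<Omega> \<in> lmeasurable" and \<phi>: "test_fun \<Omega> \<phi>" and i: "i \<in> Basis"
  shows "L2 \<Omega> (\<lambda>x. frechet_derivative \<phi> (at x) i)"
    and "(\<integral>x. frechet_derivative \<phi> (at x) i \<partial>lebesgue_on \<Omega>) = 0"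
proof -
  let ?\<psi> = "\<lambda>x. frechet_derivative \<phi> (at x) i"
  have smooth: "smooth_fun \<phi>" and supp: "compact (closure {x. \<phi> x \<noteq> 0})"
    and supp_\<Omega>: "closure {x. \<phi> x \<noteq> 0} \<subseteq> \<Omega>"
    using \<phi> by (auto simp: test_fun_def)
  have cont: "continuous_on UNIV ?\<psi>"
    by (rule smooth_fun_continuous_on[OF smooth_fun_partial[OF smooth i]])
  obtain B where "\<And>x. \<bar>?\<psi> x\<bar> \<le> B"
    using bounded_partial_derivative[OF cont supp] by blast
  moreover have "?\<psi> \<in> borel_measurable (lebesgue_on \<Omega>)"
    using continuous_imp_measurable_on_sets_lebesgue[OF continuous_on_subset[OF cont]] \<Omega> by blast
  ultimately show "L2 \<Omega> ?\<psi>"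
    using L2_bounded[OF \<Omega>] by blast
  have "?\<psi> x = 0" if "x \<notin> \<Omega>" for x
    using that supp_\<Omega> by (subst frechet_derivative_outside_support) auto
  then have "(\<lambda>x. if x \<in> \<Omega> then ?\<psi> x else 0) = ?\<psi>"
    by auto
  then have "(\<integral>x. ?\<psi> x \<partial>lebesgue_on \<Omega>) = (\<integral>x. ?\<psi> x \<partial>lebesgue)"
    using Lebesgue_Measure.integral_restrict_UNIV[of \<Omega> ?\<psi>] \<Omega> by (simp add: fmeasurableD)
  also have "\<dots> = (\<integral>x. ?\<psi> x \<partial>lborel)"
    using cont by (simp add: integral_completion borel_measurable_continuous_onI)
  also have "\<dots> = 0"
    using integral_partial_derivative_eq_0[OF _ cont supp] smooth_fun_differentiable[OF smooth] by blast
  finally show "(\<integral>x. ?\<psi> x \<partial>lebesgue_on \<Omega>) = 0" .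
qed

lemma H1_diff_const:
  assumes \<Omega>: "\<Omega> \<in> lmeasurable" and v: "H1 \<Omega> v g"
  shows "H1 \<Omega> (\<lambda>x. v x - c) g"
proof -
  have "weak_grad \<Omega> (\<lambda>x. v x - c) g"
    unfolding weak_grad_def
  proof (intro allI impI ballI)
    fix \<phi> :: "'a \<Rightarrow> real" and i :: 'a
    assume \<phi>: "test_fun \<Omega> \<phi>" and i: "i \<in> Basis"
    note \<psi> = test_fun_partial[OF \<Omega> \<phi> i]
    have "(\<integral>x. (v x - c) * frechet_derivative \<phi> (at x) i \<partial>lebesgue_on \<Omega>)
        = (\<integral>x. v x * frechet_derivative \<phi> (at x) i \<partial>lebesgue_on \<Omega>)
          - c * (\<integral>x. frechet_derivative \<phi> (at x) i \<partial>lebesgue_on \<Omega>)"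
      using L2_mult_integrable[OF _ \<psi>(1)] L2_integrable[OF \<Omega> \<psi>(1)] v
      by (simp add: H1_def left_diff_distrib)
    then show "(\<integral>x. (v x - c) * frechet_derivative \<phi> (at x) i \<partial>lebesgue_on \<Omega>)
        = - (\<integral>x. (g x \<bullet> i) * \<phi> x \<partial>lebesgue_on \<Omega>)"
      using \<psi>(2) v \<phi> i by (simp add: H1_def weak_grad_def)
  qed
  then show ?thesis
    using v L2_diff[OF _ L2_const[OF \<Omega>]] by (simp add: H1_def)
qed

lemma H1_minus:
  assumes "H1 \<Omega> v g"
  shows "H1 \<Omega> (\<lambda>x. - v x) (\<lambda>x. - g x)"
proof -
  have "weak_grad \<Omega> (\<lambda>x. - v x) (\<lambda>x. - g x)"
    using assms by (simp add: H1_def weak_grad_def)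
  moreover have "L2 \<Omega> (\<lambda>x. - g x \<bullet> i)" if "i \<in> Basis" for i
    using assms that L2_minus[of \<Omega> "\<lambda>x. g x \<bullet> i"] by (simp add: H1_def)
  ultimately show ?thesis
    using assms L2_minus[of \<Omega> v] by (simp add: H1_def)
qed

section \<open>The dual norm\<close>

abbreviation VA_norm :: "'a::euclidean_space set \<Rightarrow> real \<Rightarrow> ('a \<Rightarrow> real) \<Rightarrow> ('a \<Rightarrow> 'a) \<Rightarrow> real"
  where "VA_norm \<Omega> \<beta> v g \<equiv> sqrt (\<beta> * (nrmv \<Omega> g)\<^sup>2 + (nrm \<Omega> v)\<^sup>2)"

lemma nrm_le_VA_norm: "0 \<le> \<beta> \<Longrightarrow> nrm \<Omega> v \<le> VA_norm \<Omega> \<beta> v g"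
  by (rule real_le_rsqrt) simp

lemma ip_div_le_nrm:
  assumes "L2 \<Omega> f" "L2 \<Omega> v" "nrm \<Omega> v \<le> d" "d \<noteq> 0"
  shows "ip \<Omega> f v / d \<le> nrm \<Omega> f"
proof -
  have "0 < d" using assms(3,4) nrm_nonneg[of \<Omega> v] by linarith
  have "ip \<Omega> f v \<le> nrm \<Omega> f * nrm \<Omega> v"
    using ip_Cauchy_Schwarz[OF assms(1,2)] by linarith
  also have "\<dots> \<le> nrm \<Omega> f * d"
    using assms(3) by (simp add: mult_left_mono nrm_nonneg)
  finally show ?thesis
    using \<open>0 < d\<close> by (simp add: divide_le_eq)
qed

lemma ip_div_le_dual_norm:
  assumes \<beta>: "0 \<le> \<beta>" and f: "L2 \<Omega> f" and w: "H1 \<Omega> w g" and nz: "VA_norm \<Omega> \<beta> w g \<noteq> 0"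
  shows "ip \<Omega> f w / VA_norm \<Omega> \<beta> w g \<le> dual_norm \<Omega> \<beta> f"
proof (cases "\<beta> = 0")
  case True
  let ?A = "{ip \<Omega> f v / nrm \<Omega> v | v. L2 \<Omega> v \<and> nrm \<Omega> v \<noteq> 0}"
  have "bdd_above ?A"
    using ip_div_le_nrm[OF f] by (auto intro: bdd_aboveI[of _ "nrm \<Omega> f"])
  moreover have "ip \<Omega> f w / VA_norm \<Omega> \<beta> w g \<in> ?A"
    using True w nz by (auto simp: H1_def nrm_nonneg)
  ultimately show ?thesis
    using True by (simp add: dual_norm_def cSup_upper)
next
  case False
  let ?A = "{ip \<Omega> f v / VA_norm \<Omega> \<beta> v g | v g. H1 \<Omega> v g \<and> VA_norm \<Omega> \<beta> v g \<noteq> 0}"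
  have "bdd_above ?A"
    using ip_div_le_nrm[OF f _ nrm_le_VA_norm[OF \<beta>]]
    by (auto simp: H1_def intro!: bdd_aboveI[of _ "nrm \<Omega> f"])
  moreover have "ip \<Omega> f w / VA_norm \<Omega> \<beta> w g \<in> ?A"
    using w nz by blast
  ultimately show ?thesis
    using False by (simp add: dual_norm_def cSup_upper)
qed

lemma ip_le_dual_norm:
  assumes \<beta>: "0 \<le> \<beta>" and f: "L2 \<Omega> f" and w: "H1 \<Omega> w g"
  shows "\<bar>ip \<Omega> f w\<bar> \<le> dual_norm \<Omega> \<beta> f * VA_norm \<Omega> \<beta> w g"
proof (cases "VA_norm \<Omega> \<beta> w g = 0")
  case True
  then have "nrm \<Omega> w = 0"
    using nrm_le_VA_norm[OF \<beta>, of \<Omega> w g] nrm_nonneg[of \<Omega> w] by linarith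
  then have "ip \<Omega> f w = 0"
    using ip_eq_0_if_nrm_eq_0[OF f] w by (simp add: H1_def)
  then show ?thesis
    unfolding True by simp
next
  case False
  then have pos: "0 < VA_norm \<Omega> \<beta> w g"
    using \<beta> by (simp add: less_le)
  have "VA_norm \<Omega> \<beta> (\<lambda>x. - w x) (\<lambda>x. - g x) = VA_norm \<Omega> \<beta> w g"
    by (simp add: nrm_def nrmv_def)
  then have "ip \<Omega> f (\<lambda>x. - w x) / VA_norm \<Omega> \<beta> w g \<le> dual_norm \<Omega> \<beta> f"
    using ip_div_le_dual_norm[OF \<beta> f H1_minus[OF w]] False by simp
  moreover have "ip \<Omega> f w / VA_norm \<Omega> \<beta> w g \<le> dual_norm \<Omega> \<beta> f"
    using ip_div_le_dual_norm[OF \<beta> f w False] .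
  ultimately have "- ip \<Omega> f w \<le> dual_norm \<Omega> \<beta> f * VA_norm \<Omega> \<beta> w g"
    "ip \<Omega> f w \<le> dual_norm \<Omega> \<beta> f * VA_norm \<Omega> \<beta> w g"
    unfolding pos_divide_le_eq[OF pos] by (simp_all add: ip_def)
  then show ?thesis
    by (simp add: abs_le_iff)
qed

section \<open>The energy estimate\<close>

lemma integral_eq_measure_mult_mean:
  assumes "\<Omega> \<in> lmeasurable"
  shows "(\<integral>x. v x \<partial>lebesgue_on \<Omega>) = measure lebesgue \<Omega> * mean \<Omega> v"
proof (cases "measure lebesgue \<Omega> = 0")
  case True
  then show ?thesis
    using assms by (metis integral_eq_zero_null_sets negligible_iff_measure0
        negligible_iff_null_sets mult_zero_left)
qed (simp add: mean_def)

lemma integral_const_lebesgue_on: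
  "\<Omega> \<in> lmeasurable \<Longrightarrow> (\<integral>x. c \<partial>lebesgue_on \<Omega>) = measure lebesgue \<Omega> * c"
  by (simp add: measure_restrict_space fmeasurableD)

lemma integral_diff_mean:
  assumes \<Omega>: "\<Omega> \<in> lmeasurable" and v: "L2 \<Omega> v"
  shows "(\<integral>x. v x - mean \<Omega> v \<partial>lebesgue_on \<Omega>) = 0"
proof -
  have "(\<integral>x. v x - mean \<Omega> v \<partial>lebesgue_on \<Omega>)
      = (\<integral>x. v x \<partial>lebesgue_on \<Omega>) - (\<integral>x. mean \<Omega> v \<partial>lebesgue_on \<Omega>)"
    using L2_integrable[OF \<Omega> v] L2_integrable[OF \<Omega> L2_const[OF \<Omega>]]
    by (rule Bochner_Integration.integral_diff)
  then show ?thesis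
    by (simp only: integral_const_lebesgue_on[OF \<Omega>] integral_eq_measure_mult_mean[OF \<Omega>, of v])
qed

lemma nrm_diff_mean_le:
  assumes \<Omega>: "\<Omega> \<in> lmeasurable" and v: "L2 \<Omega> v"
  shows "nrm \<Omega> (\<lambda>x. v x - mean \<Omega> v) \<le> nrm \<Omega> v"
proof -
  let ?m = "mean \<Omega> v"
  have "(\<integral>x. (v x - ?m)\<^sup>2 \<partial>lebesgue_on \<Omega>)
      = (\<integral>x. (v x)\<^sup>2 - 2 * ?m * v x + ?m\<^sup>2 \<partial>lebesgue_on \<Omega>)"
    by (simp add: power2_diff algebra_simps)
  also have "\<dots> = (\<integral>x. (v x)\<^sup>2 \<partial>lebesgue_on \<Omega>) - 2 * ?m * (\<integral>x. v x \<partial>lebesgue_on \<Omega>)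
        + measure lebesgue \<Omega> * ?m\<^sup>2"
    using L2_square_integrable[OF v] L2_integrable[OF \<Omega> v] L2_integrable[OF \<Omega> L2_const[OF \<Omega>]]
    by (simp add: measure_restrict_space fmeasurableD[OF \<Omega>])
  also have "\<dots> = (\<integral>x. (v x)\<^sup>2 \<partial>lebesgue_on \<Omega>) - measure lebesgue \<Omega> * ?m\<^sup>2"
    by (simp add: integral_eq_measure_mult_mean[OF \<Omega>, of v] power2_eq_square)
  also have "\<dots> \<le> (\<integral>x. (v x)\<^sup>2 \<partial>lebesgue_on \<Omega>)"
    by simp
  finally show ?thesis
    unfolding nrm_def by (rule real_sqrt_le_mono)
qed

text \<open>The discrete counterpart of \<open>(\<partial>\<^sub>t w, w) = d\<^sub>t \<parallel>w\<parallel>\<^sup>2 / 2\<close>, from \<open>(a - b) a \<ge> (a\<^sup>2 - b\<^sup>2) / 2\<close>.\<close>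
lemma ip_diff_self_ge:
  assumes a: "L2 \<Omega> a" and b: "L2 \<Omega> b"
  shows "((nrm \<Omega> a)\<^sup>2 - (nrm \<Omega> b)\<^sup>2) / 2 \<le> ip \<Omega> (\<lambda>x. a x - b x) a"
proof -
  have "((nrm \<Omega> a)\<^sup>2 - (nrm \<Omega> b)\<^sup>2) / 2 = (\<integral>x. ((a x)\<^sup>2 - (b x)\<^sup>2) / 2 \<partial>lebesgue_on \<Omega>)"
    using L2_square_integrable[OF a] L2_square_integrable[OF b] by (simp add: nrm_power2)
  also have "\<dots> \<le> ip \<Omega> (\<lambda>x. a x - b x) a"
    unfolding ip_def
  proof (rule integral_mono)
    fix x
    have "(a x - b x) * a x - ((a x)\<^sup>2 - (b x)\<^sup>2) / 2 = (a x - b x)\<^sup>2 / 2"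
      by (simp add: power2_eq_square field_simps)
    then show "((a x)\<^sup>2 - (b x)\<^sup>2) / 2 \<le> (a x - b x) * a x"
      using zero_le_power2[of "a x - b x"] by linarith
  qed (use L2_square_integrable[OF a] L2_square_integrable[OF b] L2_mult_integrable[OF L2_diff[OF a b] a]
      in auto)
  finally show ?thesis .
qed

lemma ip_add_const_left:
  assumes "\<Omega> \<in> lmeasurable" "L2 \<Omega> f" "L2 \<Omega> v"
  shows "ip \<Omega> (\<lambda>x. f x + c) v = ip \<Omega> f v + c * (\<integral>x. v x \<partial>lebesgue_on \<Omega>)"
  using L2_mult_integrable[OF assms(2,3)] L2_integrable[OF assms(1,3)]
  by (simp add: ip_def distrib_right)

lemma mult_le_Young:
  fixes a x e :: real
  assumes "0 < e"
  shows "a * x \<le> e * x\<^sup>2 / 2 + a\<^sup>2 / (2 * e)"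
proof -
  have "e * x\<^sup>2 / 2 + a\<^sup>2 / (2 * e) - a * x = (e * x - a)\<^sup>2 / (2 * e)"
    using assms by (simp add: field_simps power2_eq_square)
  moreover have "0 \<le> (e * x - a)\<^sup>2 / (2 * e)"
    using assms by simp
  ultimately show ?thesis
    by linarith
qed

lemma dual_pairing_le_Young:
  fixes a d p s G N L :: real
  assumes a: "0 < a" and p: "\<bar>p\<bar> \<le> d * N" and N: "0 \<le> N" "N \<le> s * G" and s: "0 \<le> s"
  shows "L * p \<le> a * G\<^sup>2 / 2 + L\<^sup>2 * s\<^sup>2 / (2 * a) * d\<^sup>2"
proof (cases "0 \<le> d")
  case True
  have "L * p \<le> \<bar>L\<bar> * \<bar>p\<bar>"
    by (simp add: abs_mult[symmetric])
  also have "\<dots> \<le> \<bar>L\<bar> * (d * (s * G))"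
    using p N True by (intro mult_left_mono order_trans[OF p] mult_left_mono) auto
  also have "\<dots> = (\<bar>L\<bar> * d * s) * G"
    by simp
  also have "\<dots> \<le> a * G\<^sup>2 / 2 + (\<bar>L\<bar> * d * s)\<^sup>2 / (2 * a)"
    by (rule mult_le_Young[OF a])
  finally show ?thesis
    by (simp add: power_mult_distrib mult_ac)
next
  case False
  then have "p = 0"
    using p N(1) mult_nonpos_nonneg[of d N] by linarith
  then show ?thesis
    using a by simp
qed

text \<open>Tested with \<open>\<theta>' - mean \<theta>'\<close>, which has mean zero and so annihilates the constant part
  of \<open>\<theta>' - \<theta>\<close>.\<close>
lemma implicit_step_energy_estimate:
  fixes \<Omega> :: "'a::euclidean_space set"
  assumes \<Omega>: "\<Omega> \<in> lmeasurable" and \<beta>: "0 \<le> \<beta>" and a: "0 < a"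
    and \<theta>: "L2 \<Omega> \<theta>" and \<theta>': "H1 \<Omega> \<theta>' g" and f: "L2 \<Omega> f"
    and poincare: "nrm \<Omega> (\<lambda>x. \<theta>' x - mean \<Omega> \<theta>') \<le> C * nrmv \<Omega> g"
    and scheme: "\<And>\<phi> g\<phi>. H1 \<Omega> \<phi> g\<phi> \<Longrightarrow>
      ip \<Omega> (\<lambda>x. \<theta>' x - \<theta> x) \<phi> + a * ipv \<Omega> g g\<phi> - L * ip \<Omega> f \<phi> = 0"
  shows "a * (nrmv \<Omega> g)\<^sup>2
      + (nrm \<Omega> (\<lambda>x. \<theta>' x - mean \<Omega> \<theta>'))\<^sup>2 - (nrm \<Omega> (\<lambda>x. \<theta> x - mean \<Omega> \<theta>))\<^sup>2
    \<le> L\<^sup>2 * (\<beta> + C\<^sup>2) / a * (dual_norm \<Omega> \<beta> f)\<^sup>2"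
proof -
  define w where "w = (\<lambda>x. \<theta> x - mean \<Omega> \<theta>)"
  define w' where "w' = (\<lambda>x. \<theta>' x - mean \<Omega> \<theta>')"
  define R where "R = L\<^sup>2 * (\<beta> + C\<^sup>2) / (2 * a) * (dual_norm \<Omega> \<beta> f)\<^sup>2"
  have L2_\<theta>': "L2 \<Omega> \<theta>'" using \<theta>' by (simp add: H1_def)
  have L2_w: "L2 \<Omega> w" "L2 \<Omega> w'"
    unfolding w_def w'_def using L2_diff L2_const[OF \<Omega>] \<theta> L2_\<theta>' by blast+
  have H1_w': "H1 \<Omega> w' g"
    unfolding w'_def by (rule H1_diff_const[OF \<Omega> \<theta>'])
  have tested: "ip \<Omega> (\<lambda>x. \<theta>' x - \<theta> x) w' + a * (nrmv \<Omega> g)\<^sup>2 - L * ip \<Omega> f w' = 0"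
    using scheme[OF H1_w'] by (simp add: ipv_self)
  have "ip \<Omega> (\<lambda>x. \<theta>' x - \<theta> x) w' = ip \<Omega> (\<lambda>x. w' x - w x + (mean \<Omega> \<theta>' - mean \<Omega> \<theta>)) w'"
    by (simp add: w_def w'_def)
  also have "\<dots> = ip \<Omega> (\<lambda>x. w' x - w x) w'"
    using ip_add_const_left[OF \<Omega> L2_diff[OF L2_w(2,1)] L2_w(2)] integral_diff_mean[OF \<Omega> L2_\<theta>']
    unfolding w'_def[symmetric] by simp
  finally have energy: "((nrm \<Omega> w')\<^sup>2 - (nrm \<Omega> w)\<^sup>2) / 2 \<le> ip \<Omega> (\<lambda>x. \<theta>' x - \<theta> x) w'"
    using ip_diff_self_ge[OF L2_w(2,1)] by simp
  have VA_le: "VA_norm \<Omega> \<beta> w' g \<le> sqrt (\<beta> + C\<^sup>2) * nrmv \<Omega> g"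
  proof (rule real_le_lsqrt)
    have "(nrm \<Omega> w')\<^sup>2 \<le> (C * nrmv \<Omega> g)\<^sup>2"
      using poincare nrm_nonneg[of \<Omega> w'] unfolding w'_def by (intro power_mono)
    then show "\<beta> * (nrmv \<Omega> g)\<^sup>2 + (nrm \<Omega> w')\<^sup>2 \<le> (sqrt (\<beta> + C\<^sup>2) * nrmv \<Omega> g)\<^sup>2"
      using \<beta> by (simp add: power_mult_distrib algebra_simps)
  qed (use \<beta> nrmv_nonneg[of \<Omega> g] in simp)
  have duality: "L * ip \<Omega> f w' \<le> a * (nrmv \<Omega> g)\<^sup>2 / 2 + R"
    using dual_pairing_le_Young[OF a ip_le_dual_norm[OF \<beta> f H1_w'] _ VA_le, of L] \<beta>
    by (simp add: R_def)
  have two_R: "L\<^sup>2 * (\<beta> + C\<^sup>2) / a * (dual_norm \<Omega> \<beta> f)\<^sup>2 = 2 * R"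
    by (simp add: R_def)
  show ?thesis
    unfolding two_R using tested energy duality unfolding w_def w'_def by argo
qed

lemma sum_telescoping_estimate:
  fixes G E d :: "nat \<Rightarrow> real"
  assumes "\<And>k. 1 \<le> k \<Longrightarrow> k \<le> K \<Longrightarrow> a * G k + E k - E (k - 1) \<le> b * d k"
  shows "a * (\<Sum>k = 1..K. G k) + E K - E 0 \<le> b * (\<Sum>k = 1..K. d k)"
proof -
  have "a * (\<Sum>k = 1..K. G k) + E K - E 0 = (\<Sum>k = 1..K. a * G k + (E k - E (k - 1)))"
    using sum_telescope''[of 0 K E] by (simp add: sum.distrib sum_distrib_left)
  also have "\<dots> \<le> (\<Sum>k = 1..K. b * d k)"
    using assms by (intro sum_mono) (simp add: add_diff_eq)
  finally show ?thesis
    by (simp add: sum_distrib_left)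
qed

theorem mainTheorem5:
  fixes \<Omega> :: "'a::euclidean_space set"
    and C\<^sub>P D L \<beta> T \<tau> :: real and K :: nat
    and u \<theta> :: "nat \<Rightarrow> 'a \<Rightarrow> real" and g\<theta> :: "nat \<Rightarrow> 'a \<Rightarrow> 'a"
  assumes dom: "open \<Omega>" "connected \<Omega>" "bounded \<Omega>" "\<Omega> \<noteq> {}"
    and poincare: "\<And>v g. H1 \<Omega> v g \<Longrightarrow> nrm \<Omega> (\<lambda>x. v x - mean \<Omega> v) \<le> C\<^sub>P * nrmv \<Omega> g"
    and D: "D > 0" and beta: "\<beta> \<ge> 0" and T: "T > 0" and K: "K > 0"
    and tau: "\<tau> = T / real K"
    and u: "\<And>k. k \<le> K \<Longrightarrow> L2 \<Omega> (u k)"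
    and theta0: "L2 \<Omega> (\<theta> 0)"
    and theta: "\<And>k. 1 \<le> k \<Longrightarrow> k \<le> K \<Longrightarrow> H1 \<Omega> (\<theta> k) (g\<theta> k)"
    and scheme: "\<And>k \<phi> g\<phi>. 1 \<le> k \<Longrightarrow> k \<le> K \<Longrightarrow> H1 \<Omega> \<phi> g\<phi> \<Longrightarrow>
        ip \<Omega> (\<lambda>x. \<theta> k x - \<theta> (k - 1) x) \<phi> + D * \<tau> * ipv \<Omega> (g\<theta> k) g\<phi>
          - L * ip \<Omega> (\<lambda>x. u k x - u (k - 1) x) \<phi> = 0"
  shows "\<tau> * (\<Sum>k = 1..K. (nrmv \<Omega> (g\<theta> k))\<^sup>2)
     \<le> (nrm \<Omega> (\<theta> 0))\<^sup>2 / D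
        + L\<^sup>2 * (\<beta> + C\<^sub>P\<^sup>2) / D\<^sup>2 * (1 / \<tau>)
          * (\<Sum>k = 1..K. (dual_norm \<Omega> \<beta> (\<lambda>x. u k x - u (k - 1) x))\<^sup>2)"
proof -
  have \<Omega>: "\<Omega> \<in> lmeasurable" using dom by (simp add: lmeasurable_open)
  have D\<tau>: "0 < D * \<tau>" using D T K tau by simp
  define E where "E k = (nrm \<Omega> (\<lambda>x. \<theta> k x - mean \<Omega> (\<theta> k)))\<^sup>2" for k
  define S\<^sub>\<theta> where "S\<^sub>\<theta> = (\<Sum>k = 1..K. (nrmv \<Omega> (g\<theta> k))\<^sup>2)"
  define S\<^sub>u where "S\<^sub>u = (\<Sum>k = 1..K. (dual_norm \<Omega> \<beta> (\<lambda>x. u k x - u (k - 1) x))\<^sup>2)"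
  define c where "c = L\<^sup>2 * (\<beta> + C\<^sub>P\<^sup>2)"
  have L2_\<theta>: "L2 \<Omega> (\<theta> k)" if "k \<le> K" for k
    using theta0 theta[of k] that by (cases k) (auto simp: H1_def)
  have "D * \<tau> * S\<^sub>\<theta> + E K - E 0 \<le> c / (D * \<tau>) * S\<^sub>u"
    unfolding E_def S\<^sub>\<theta>_def S\<^sub>u_def c_def
    by (intro sum_telescoping_estimate implicit_step_energy_estimate[OF \<Omega> beta D\<tau>]
        L2_\<theta> theta poincare scheme L2_diff u) auto
  moreover have "E 0 \<le> (nrm \<Omega> (\<theta> 0))\<^sup>2"
    unfolding E_def using nrm_diff_mean_le[OF \<Omega> theta0] nrm_nonneg by (intro power_mono)
  moreover have "0 \<le> E K" by (simp add: E_def)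
  ultimately have "D * \<tau> * S\<^sub>\<theta> \<le> c / (D * \<tau>) * S\<^sub>u + (nrm \<Omega> (\<theta> 0))\<^sup>2"
    by linarith
  then have "\<tau> * S\<^sub>\<theta> \<le> (c / (D * \<tau>) * S\<^sub>u + (nrm \<Omega> (\<theta> 0))\<^sup>2) / D"
    using D by (simp add: pos_le_divide_eq mult_ac)
  then show ?thesis
    unfolding S\<^sub>\<theta>_def[symmetric] S\<^sub>u_def[symmetric] c_def[symmetric]
    by (simp add: add_divide_distrib power2_eq_square mult_ac)
qed

end
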